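(* Let $s\ge1$, let $q$ be a prime power, let $\mathbf{T}:\mathbb{N}_0\to\mathbb{N}_0$ with $\mathbf{T}(m)\le m$, and let $C^{(1)},\ldots,C^{(s)}\in\mathbb{F}_q^{\mathbb{N}\times\mathbb{N}_0}$ be finite-row generating matrices satisfying the following condition: for every $m$ with $m>\mathbf{T}(m)$ and all integers $d_1,\ldots,d_s\ge0$ with $1\le d_1+\cdots+d_s\le m-\mathbf{T}(m)$, the $(d_1+\cdots+d_s)\times m$ matrix over $\mathbb{F}_q$ with rows $(c^{(i)}_{j,0},\ldots,c^{(i)}_{j,m-1})$, $1\le j\le d_i$, $1\le i\le s$, has rank $d_1+\cdots+d_s$. Let $\alpha$ be a $q$-adic integer with representation $\alpha=\sum_{i\ge0}a_iq^i$ and let $s_n=n+\alpha$ ($n\ge0$). Let $\mathcal{S}$ be the sequence produced by Algorithm 2 with these matrices, the input $(s_n)$, and any choice of bijections $\psi_r,\lambda_{i,j}$. Then for every $N\ge1$, $$N D_N^*(\mathcal{S})\le (q-a_0)\Delta_q(\mathbf{T}(0),0,s)+\sum_{j=1}^{r-1}(q-1-a_j)\Delta_q(\mathbf{T}(j),j,s)+\sum_{j=0}^{r}b_j\Delta_q(\mathbf{T}(j),j,s),$$ where $r=\lfloor\log_q N\rfloor$ and $\sum_{j=0}^rb_jq^j$ is the base $q$ representation of $N'=N-q^r+\sum_{j=0}^{r-1}a_jq^j$.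
   Context: $\mathbb{F}_q$ is the finite field with $q$ elements, $D_q=\{0,\ldots,q-1\}$; $\mathbb{Z}_q$ is the ring of $q$-adic integers, each $z\in\mathbb{Z}_q$ having a unique representation $z=\sum_{r\ge0}a_rq^r$, $a_r\in D_q$. A matrix $(c^{(i)}_{j,r})_{j\ge1,r\ge0}$ is finite-row if each row has finitely many nonzero entries. Algorithm 2: choose bijections $\psi_r:D_q\to\mathbb{F}_q$ ($r\ge0$), finite-row matrices $C^{(i)}=(c^{(i)}_{j,r})$, bijections $\lambda_{i,j}:\mathbb{F}_q\to D_q$ and $(s_n)$ in $\mathbb{Z}_q$; with $s_n=\sum_ra_r'q^r$ put $x_n^{(i)}=\sum_{j\ge1}\lambda_{i,j}(\sum_rc^{(i)}_{j,r}\psi_r(a_r'))q^{-j}$, $\boldsymbol{x}_n=(x_n^{(1)},\ldots,x_n^{(s)})\in[0,1]^s$. Star discrepancy: $D_N^*(\mathcal{S})=\sup_J|A(J)/N-\mathrm{vol}(J)|$, sup over subintervals $J\subseteq[0,1]^s$ with one vertex at the origin, $A(J)=\#\{0\le n<N:\boldsymbol{x}_n\in J\}$. Elementary interval in base $q$: $\prod_i[a_iq^{-d_i},(a_i+1)q^{-d_i})$, $d_i\ge0$, $0\le a_i<q^{d_i}$. For $0\le t\le m$, a $(t,m,s)$-net in base $q$ is a set of $q^m$ points in $[0,1)^s$ with exactly $q^t$ points in every elementary interval of volume $q^{t-m}$. $\Delta_q(t,m,s)$ denotes any quantity such that $q^mD^*_{q^m}(\mathcal{P})\le\Delta_q(t,m,s)$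 for every $(t,m,s)$-net $\mathcal{P}$ in base $q$ (e.g. Niederreiter's bound $q^t\sum_{i=0}^{s-1}\binom{s-1}{i}\binom{m-t}{i}\lfloor q/2\rfloor^i$ for $q>2$). *)

theory Defs
  imports Complex_Main "Jordan_Normal_Form.DL_Rank"
begin

text \<open>Points in [0,1]^s are functions nat => real; coordinates i = 1..s are used.
  Sequences / point sets are indexed by n (first N points are n < N).\<close>

definition star_disc :: "nat \<Rightarrow> nat \<Rightarrow> (nat \<Rightarrow> nat \<Rightarrow> real) \<Rightarrow> real" where
  "star_disc s N x =
     (SUP u \<in> {u :: nat \<Rightarrow> real. \<forall>i\<in>{1..s}. 0 \<le> u i \<and> u i \<le> 1}.
        \<bar>real (card {n. n < N \<and> (\<forall>i\<in>{1..s}. 0 \<le> x n i \<and> x n i < u i)}) / real N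
          - (\<Prod>i=1..s. u i)\<bar>)"

text \<open>(t,m,s)-net in base q given as the first q^m points of P (repetitions allowed).
  An elementary interval with exponents d_i has volume q^(t-m) iff sum d_i = m - t.\<close>
definition is_net :: "nat \<Rightarrow> nat \<Rightarrow> nat \<Rightarrow> nat \<Rightarrow> (nat \<Rightarrow> nat \<Rightarrow> real) \<Rightarrow> bool" where
  "is_net q t m s P \<longleftrightarrow> t \<le> m \<and>
     (\<forall>n < q ^ m. \<forall>i\<in>{1..s}. 0 \<le> P n i \<and> P n i < 1) \<and>
     (\<forall>(d :: nat \<Rightarrow> nat) (a :: nat \<Rightarrow> nat).
        (\<forall>i\<in>{1..s}. a i < q ^ d i) \<and> (\<Sum>i=1..s. d i) = m - t \<longrightarrow>
        card {n. n < q ^ m \<and> (\<forall>i\<in>{1..s}.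
               real (a i) / real q ^ d i \<le> P n i \<and> P n i < real (a i + 1) / real q ^ d i)}
          = q ^ t)"

text \<open>Digit r of the q-adic integer n + alpha, alpha given by its digit sequence.\<close>
definition padic_add_digit :: "nat \<Rightarrow> nat \<Rightarrow> (nat \<Rightarrow> nat) \<Rightarrow> nat \<Rightarrow> nat" where
  "padic_add_digit q n \<alpha> r = ((n + (\<Sum>k\<le>r. \<alpha> k * q ^ k)) div q ^ r) mod q"

text \<open>Algorithm 2 with input s_n = n + alpha: coordinate i of point n.
  C i j r = c^(i)_{j,r}; psi r : D_q -> F_q; lam i j : F_q -> D_q.
  The inner sum is over the (finite) support of row j of C^(i).\<close>
definition alg2_point :: "(nat \<Rightarrow> nat \<Rightarrow> nat \<Rightarrow> 'f::{field,finite}) \<Rightarrow> (nat \<Rightarrow> nat \<Rightarrow> 'f)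
    \<Rightarrow> (nat \<Rightarrow> nat \<Rightarrow> 'f \<Rightarrow> nat) \<Rightarrow> (nat \<Rightarrow> nat) \<Rightarrow> nat \<Rightarrow> nat \<Rightarrow> real" where
  "alg2_point C \<psi> lam \<alpha> n i =
     (\<Sum>j. real (lam i (Suc j)
        (\<Sum>r\<in>{r. C i (Suc j) r \<noteq> 0}. C i (Suc j) r * \<psi> r (padic_add_digit (card (UNIV :: 'f set)) n \<alpha> r)))
        / real (card (UNIV :: 'f set)) ^ Suc j)"

definition gen_submatrix :: "nat \<Rightarrow> (nat \<Rightarrow> nat \<Rightarrow> nat \<Rightarrow> 'f::field) \<Rightarrow> (nat \<Rightarrow> nat) \<Rightarrow> nat \<Rightarrow> 'f mat" where
  "gen_submatrix s C d m =
     mat_of_rows m (concat (map (\<lambda>i. map (\<lambda>j. vec m (\<lambda>r. C i j r)) [1..<d i + 1]) [1..<s + 1]))"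

end

theory Submission
  imports Defs
begin

text \<open>Call a block of indices \<open>[p, p + q^j)\<close> aligned if \<open>p + \<alpha> \<equiv> 0 (mod q^j)\<close> in \<open>\<int>\<^sub>q\<close>. Along
  an aligned block the lowest \<open>j\<close> digits of \<open>s\<^sub>n = n + \<alpha>\<close> run through all of \<open>D\<^sub>q\<^sup>j\<close> while the higher
  digits stay fixed, so each digit of the points is a bijective image of an affine function of
  that digit vector. The rank condition then makes every elementary interval of volume
  \<open>q^(T(j)-j)\<close> a coset of the solution space of a full-rank linear system with exactly \<open>q^T(j)\<close>
  elements: the block is a \<open>(T(j), j, s)\<close>-net, and its local discrepancy is at most
  \<open>\<Delta>\<^sub>q(T(j), j, s)\<close>.

  Now \<open>[0, N)\<close> is the disjoint union of \<open>[0, q^r - (\<alpha> mod q^r))\<close>, which consists of \<open>q - a\<^sub>0\<close>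
  aligned blocks of length \<open>1\<close> and \<open>q - 1 - a\<^sub>j\<close> aligned blocks of length \<open>q^j\<close> for \<open>0 < j < r\<close>,
  and of an aligned segment of length \<open>N'\<close>, which consists of \<open>b\<^sub>j\<close> aligned blocks of length
  \<open>q^j\<close>. Summing the local discrepancies gives the bound. Since points may have infinitely many
  digits, the argument is run on the points truncated to \<open>K\<close> digits, which moves them by at most
  \<open>q^-K\<close>; letting \<open>K \<rightarrow> \<infinity>\<close> removes the error.\<close>

section \<open>Solutions of full-rank linear systems over a finite field\<close>

lemma (in vec_space) full_rank_imp_span_cols:
  assumes A: "A \<in> carrier_mat n m" and r: "rank A = n"
  shows "carrier_vec n \<subseteq> span (set (cols A))"
proof -
  let ?X = "span (set (cols A))"
  have cs: "set (cols A) \<subseteq> carrier V" using A unfolding cols_def by auto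
  have sub: "subspace class_ring ?X V"
    using cs span_is_subspace by auto
  have vsX: "vectorspace class_ring (vs ?X)" using sub subspace_is_vs by auto
  have "vectorspace.fin_dim class_ring (vs ?X)" using fin_dim_span_cols A by auto
  then obtain b where b: "vectorspace.basis class_ring (vs ?X) b"
    using vectorspace.finite_basis_exists[OF vsX] by blast
  have bX: "b \<subseteq> ?X" using b vectorspace.basis_def[OF vsX] by auto
  have bV: "b \<subseteq> carrier V" using bX sub unfolding subspace_def submodule_def by auto
  have li: "lin_indpt b"
    by (metis LinearCombinations.module.span_li_not_depend(2) vsX b
        sub is_module local.carrier_vs_is_self submodule_def vectorspace.basis_def)
  have finb: "finite b" using fin_dim_li_fin bV li by auto
  have "card b = vectorspace.dim class_ring (vs ?X)"
    using vectorspace.dim_basis[OF vsX] b finb by auto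
  also have "\<dots> = dim" using r dim_is_n unfolding rank_def by simp
  finally have "basis b" using dim_li_is_basis finb bV li by auto
  then have "span b = carrier V" unfolding basis_def by auto
  moreover have "span b \<subseteq> ?X" by (rule span_is_subset[OF bX span_is_submodule]) (use cs in auto)
  ultimately show ?thesis by auto
qed

lemma full_rank_mult_mat_vec_surj:
  fixes A :: "'a::field mat"
  assumes A: "A \<in> carrier_mat k m" and r: "vec_space.rank k A = k" and y: "y \<in> carrier_vec k"
  shows "\<exists>x\<in>carrier_vec m. A *\<^sub>v x = y"
proof -
  have "y \<in> vec_space.col_space k A"
    using vec_space.full_rank_imp_span_cols[OF A r] y unfolding vec_space.col_space_def by auto
  then show ?thesis using vec_space.col_space_eq[OF A] A by auto
qed

lemma card_carrier_vec: "card (carrier_vec n :: 'a::finite vec set) = card (UNIV :: 'a set) ^ n"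
proof -
  have "bij_betw list_of_vec (carrier_vec n :: 'a vec set) {xs. set xs \<subseteq> UNIV \<and> length xs = n}"
  proof (rule bij_betw_byWitness[where f' = vec_of_list])
    show "list_of_vec ` carrier_vec n \<subseteq> {xs. set xs \<subseteq> UNIV \<and> length xs = n}" by auto
    show "vec_of_list ` {xs. set xs \<subseteq> UNIV \<and> length xs = n} \<subseteq> carrier_vec n"
      by (auto intro: carrier_vecI)
  qed (simp_all add: vec_list list_vec)
  then show ?thesis
    using bij_betw_same_card card_lists_length_eq[of "UNIV :: 'a set" n] by fastforce
qed

lemma finite_carrier_vec [simp]: "finite (carrier_vec n :: 'a::finite vec set)"
  by (rule card_ge_0_finite) (simp add: card_carrier_vec finite_UNIV_card_ge_0)

text \<open>All fibres of a surjective linear map are translates of its kernel, hence equinumerous.\<close>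

lemma card_full_rank_solutions:
  fixes A :: "'a::{field,finite} mat"
  assumes A: "A \<in> carrier_mat k m" and r: "vec_space.rank k A = k" and y: "y \<in> carrier_vec k"
  shows "card {x \<in> carrier_vec m. A *\<^sub>v x = y} * card (UNIV :: 'a set) ^ k = card (UNIV :: 'a set) ^ m"
proof -
  define F where "F y = {x \<in> carrier_vec m. A *\<^sub>v x = y}" for y
  have fibre: "card (F z) = card (F (0\<^sub>v k))" if z: "z \<in> carrier_vec k" for z
  proof -
    obtain x0 where x0: "x0 \<in> carrier_vec m" "A *\<^sub>v x0 = z"
      using full_rank_mult_mat_vec_surj[OF A r z] by blast
    have "bij_betw (\<lambda>x. x + x0) (F (0\<^sub>v k)) (F z)"
    proof (rule bij_betw_byWitness[where f' = "\<lambda>x. x - x0"])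
      show "(\<lambda>x. x + x0) ` F (0\<^sub>v k) \<subseteq> F z"
        unfolding F_def using x0 A by (auto simp: mult_add_distrib_mat_vec)
      show "(\<lambda>x. x - x0) ` F z \<subseteq> F (0\<^sub>v k)"
        unfolding F_def using x0 A by (auto simp: mult_minus_distrib_mat_vec)
      show "\<forall>x\<in>F (0\<^sub>v k). x + x0 - x0 = x" "\<forall>x\<in>F z. x - x0 + x0 = x"
        unfolding F_def using x0 by auto
    qed
    then show ?thesis by (simp add: bij_betw_same_card)
  qed
  have "card (UNIV :: 'a set) ^ m = (\<Sum>x\<in>(carrier_vec m :: 'a vec set). (1::nat))"
    by (simp add: card_carrier_vec)
  also have "\<dots> = (\<Sum>z\<in>(carrier_vec k :: 'a vec set). \<Sum>x\<in>F z. 1)"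
    unfolding F_def by (rule sum.group[symmetric]) (use A in auto)
  also have "\<dots> = (\<Sum>z\<in>(carrier_vec k :: 'a vec set). card (F z))"
    by simp
  also have "\<dots> = (\<Sum>z\<in>(carrier_vec k :: 'a vec set). card (F (0\<^sub>v k)))"
    by (rule sum.cong[OF refl fibre])
  also have "\<dots> = card (F (0\<^sub>v k)) * card (UNIV :: 'a set) ^ k"
    by (simp add: card_carrier_vec)
  finally show ?thesis using fibre[OF y] unfolding F_def by simp
qed

lemma mat_of_rows_mult_vec:
  assumes "set rs \<subseteq> carrier_vec m"
  shows "mat_of_rows m rs *\<^sub>v w = vec_of_list (map (\<lambda>R. R \<bullet> w) rs)"
proof (rule eq_vecI)
  fix k assume "k < dim_vec (vec_of_list (map (\<lambda>R. R \<bullet> w) rs))"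
  then have k: "k < length rs" by simp
  then have "rs ! k \<in> carrier_vec m" using assms nth_mem by blast
  then show "(mat_of_rows m rs *\<^sub>v w) $ k = vec_of_list (map (\<lambda>R. R \<bullet> w) rs) $ k"
    using k by (simp add: mat_of_rows_row vec_of_list_index)
qed simp

lemma concat_map_eq_concat_map_iff:
  assumes "\<And>x. x \<in> set xs \<Longrightarrow> length (f x) = length (g x)"
  shows "concat (map f xs) = concat (map g xs) \<longleftrightarrow> (\<forall>x\<in>set xs. f x = g x)"
  using assms by (induction xs) (auto simp: append_eq_append_conv)

lemma length_gen_rows:
  "length (concat (map (\<lambda>i. map (f i) [1..<d i + 1]) [1..<s + 1])) = (\<Sum>i=1..s. d i)"
proof -
  have "map (\<lambda>i. length (map (f i) [1..<d i + 1])) [1..<s + 1] = map d [1..<s + 1]"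
    by (simp only: length_map length_upt diff_add_inverse2)
  then have "length (concat (map (\<lambda>i. map (f i) [1..<d i + 1]) [1..<s + 1])) = sum_list (map d [1..<s + 1])"
    by (simp only: length_concat map_map comp_def)
  also have "\<dots> = sum d {1..<s + 1}" by (simp only: sum_set_upt_conv_sum_list_nat[symmetric] set_upt)
  also have "{1..<s + 1} = {1..s}" by auto
  finally show ?thesis .
qed

lemma gen_submatrix_carrier: "gen_submatrix s C d m \<in> carrier_mat (\<Sum>i=1..s. d i) m"
proof -
  let ?rs = "concat (map (\<lambda>i. map (\<lambda>j. vec m (C i j)) [1..<d i + 1]) [1..<s + 1])"
  have "mat_of_rows m ?rs \<in> carrier_mat (length ?rs) m" by (rule mat_of_rows_carrier(1))
  then show ?thesis unfolding gen_submatrix_def length_gen_rows .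
qed

definition gen_rhs :: "nat \<Rightarrow> (nat \<Rightarrow> nat \<Rightarrow> 'a) \<Rightarrow> (nat \<Rightarrow> nat) \<Rightarrow> 'a vec" where
  "gen_rhs s \<tau> d = vec_of_list (concat (map (\<lambda>i. map (\<tau> i) [1..<d i + 1]) [1..<s + 1]))"

lemma gen_rhs_carrier: "gen_rhs s \<tau> d \<in> carrier_vec (\<Sum>i=1..s. d i)"
  unfolding gen_rhs_def by (rule carrier_vecI) (simp only: dim_vec_of_list length_gen_rows)

lemma gen_submatrix_mult_vec_eq_iff:
  "gen_submatrix s C d m *\<^sub>v w = gen_rhs s \<tau> d \<longleftrightarrow>
     (\<forall>i\<in>{1..s}. \<forall>j\<in>{1..d i}. vec m (C i j) \<bullet> w = \<tau> i j)"
proof -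
  let ?rs = "concat (map (\<lambda>i. map (\<lambda>j. vec m (C i j)) [1..<d i + 1]) [1..<s + 1])"
  have inj: "vec_of_list xs = vec_of_list ys \<longleftrightarrow> xs = ys" for xs ys :: "'a list"
    by (metis list_vec)
  have "gen_submatrix s C d m *\<^sub>v w = vec_of_list (map (\<lambda>R. R \<bullet> w) ?rs)"
    unfolding gen_submatrix_def by (rule mat_of_rows_mult_vec) auto
  then have "gen_submatrix s C d m *\<^sub>v w = gen_rhs s \<tau> d \<longleftrightarrow>
      map (\<lambda>R. R \<bullet> w) ?rs = concat (map (\<lambda>i. map (\<tau> i) [1..<d i + 1]) [1..<s + 1])"
    unfolding gen_rhs_def inj[symmetric] by (simp only:)
  also have "\<dots> \<longleftrightarrow> (\<forall>i\<in>set [1..<s + 1].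
      map (\<lambda>j. vec m (C i j) \<bullet> w) [1..<d i + 1] = map (\<tau> i) [1..<d i + 1])"
    unfolding map_concat map_map comp_def by (rule concat_map_eq_concat_map_iff) simp
  also have "\<dots> \<longleftrightarrow> (\<forall>i\<in>{1..s}. \<forall>j\<in>{1..d i}. vec m (C i j) \<bullet> w = \<tau> i j)"
  proof -
    have "{1..<n + 1} = {1..n}" for n :: nat by auto
    then show ?thesis unfolding map_eq_conv set_upt by simp
  qed
  finally show ?thesis .
qed

section \<open>Base-\<open>q\<close> digit expansions\<close>

lemma ball_less_Suc_iff_ball_atLeastAtMost: "(\<forall>k<d. Q (Suc k)) \<longleftrightarrow> (\<forall>j\<in>{1..d}. Q j)"
proof
  assume h: "\<forall>k<d. Q (Suc k)"
  show "\<forall>j\<in>{1..d}. Q j"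
  proof
    fix j assume "j \<in> {1..d}"
    then have "j = Suc (j - 1)" "j - 1 < d" by auto
    then show "Q j" using h by metis
  qed
qed auto

definition from_digits :: "nat \<Rightarrow> (nat \<Rightarrow> nat) \<Rightarrow> nat \<Rightarrow> nat" where
  "from_digits q c m = (\<Sum>r<m. c r * q ^ r)"

lemma from_digits_Suc: "from_digits q c (Suc m) = c 0 + q * from_digits q (\<lambda>r. c (Suc r)) m"
  unfolding from_digits_def sum.lessThan_Suc_shift
  by (simp add: sum_distrib_left mult_ac del: sum.lessThan_Suc)

lemma from_digits_less: "(\<And>r. r < m \<Longrightarrow> c r < q) \<Longrightarrow> from_digits q c m < q ^ m"
proof (induction m arbitrary: c)
  case 0 then show ?case by (simp add: from_digits_def)
next
  case (Suc m)
  have "from_digits q (\<lambda>r. c (Suc r)) m < q ^ m" using Suc by auto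
  then have "q * (from_digits q (\<lambda>r. c (Suc r)) m + 1) \<le> q * q ^ m" by (intro mult_le_mono2) simp
  then show ?case using Suc.prems[of 0] by (simp add: from_digits_Suc algebra_simps)
qed

lemma from_digits_digit:
  "(\<And>r. r < m \<Longrightarrow> c r < q) \<Longrightarrow> j < m \<Longrightarrow> from_digits q c m div q ^ j mod q = c j"
proof (induction m arbitrary: c j)
  case 0 then show ?case by simp
next
  case (Suc m)
  have c0: "c 0 < q" using Suc.prems(1)[of 0] by simp
  show ?case
  proof (cases j)
    case 0 then show ?thesis using Suc.prems by (simp add: from_digits_Suc)
  next
    case (Suc j')
    have "from_digits q c (Suc m) div q ^ j = (c 0 + q * from_digits q (\<lambda>r. c (Suc r)) m) div q div q ^ j'"
      by (simp add: from_digits_Suc Suc div_mult2_eq)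
    also have "(c 0 + q * from_digits q (\<lambda>r. c (Suc r)) m) div q = from_digits q (\<lambda>r. c (Suc r)) m"
      using c0 by simp
    finally show ?thesis using Suc.IH[of "\<lambda>r. c (Suc r)" j'] Suc.prems \<open>j = Suc j'\<close> by auto
  qed
qed

lemma from_digits_of_digits: "n < q ^ m \<Longrightarrow> from_digits q (\<lambda>r. n div q ^ r mod q) m = n"
proof (induction m arbitrary: n)
  case 0 then show ?case by (simp add: from_digits_def)
next
  case (Suc m)
  have q: "q > 0" using Suc.prems by (cases q) auto
  have "n div q < q ^ m" using Suc.prems q by (simp add: div_less_iff_less_mult mult.commute)
  then have "from_digits q (\<lambda>r. n div q div q ^ r mod q) m = n div q" by (rule Suc.IH)
  then show ?case by (simp add: from_digits_Suc div_mult2_eq mult.commute)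
qed

lemma eq_if_digits_eq:
  fixes n n' q m :: nat
  assumes "n < q ^ m" "n' < q ^ m" "\<And>r. r < m \<Longrightarrow> n div q ^ r mod q = n' div q ^ r mod q"
  shows "n = n'"
proof -
  have "from_digits q (\<lambda>r. n div q ^ r mod q) m = from_digits q (\<lambda>r. n' div q ^ r mod q) m"
    unfolding from_digits_def using assms(3) by (intro sum.cong) auto
  then show ?thesis using from_digits_of_digits assms(1,2) by metis
qed

lemma from_digits_prefix: "l \<le> j \<Longrightarrow> \<exists>X. from_digits q c j = from_digits q c l + q ^ l * X"
proof (induction j)
  case 0 then show ?case by simp
next
  case (Suc j)
  show ?case
  proof (cases "l = Suc j")
    case False
    then obtain X where X: "from_digits q c j = from_digits q c l + q ^ l * X"
      using Suc by auto
    have "q ^ j = q ^ l * q ^ (j - l)" using False Suc.prems by (simp add: power_add[symmetric])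
    then have "from_digits q c (Suc j) = from_digits q c l + q ^ l * (X + c j * q ^ (j - l))"
      using X by (simp add: from_digits_def algebra_simps)
    then show ?thesis by blast
  qed (intro exI[of _ 0], simp)
qed

lemma digit_eq_mod_div: "q > 0 \<Longrightarrow> n div q ^ r mod q = n mod q ^ Suc r div q ^ r"
  for n q r :: nat
  using mod_mult2_eq[of n "q ^ r" q] by (simp add: mult.commute)

text \<open>\<open>frac_num q e K\<close> is the numerator of the \<open>K\<close>-digit expansion \<open>0.e\<^sub>0e\<^sub>1\<dots>e\<^sub>K\<^sub>-\<^sub>1\<close>
  over the denominator \<open>q ^ K\<close>.\<close>

fun frac_num :: "nat \<Rightarrow> (nat \<Rightarrow> nat) \<Rightarrow> nat \<Rightarrow> nat" where
  "frac_num q e 0 = 0"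
| "frac_num q e (Suc K) = q * frac_num q e K + e K"

lemma frac_num_less: "(\<And>k. k < K \<Longrightarrow> e k < q) \<Longrightarrow> frac_num q e K < q ^ K"
proof (induction K)
  case (Suc K)
  then have "frac_num q e K + 1 \<le> q ^ K" "e K < q" by auto
  then have "q * (frac_num q e K + 1) \<le> q * q ^ K" by (intro mult_le_mono2)
  then show ?case using \<open>e K < q\<close> by (simp add: algebra_simps)
qed simp

lemma frac_num_div_power:
  "q > 0 \<Longrightarrow> real (frac_num q e K) / real q ^ K = (\<Sum>k<K. real (e k) / real q ^ Suc k)"
proof (induction K)
  case (Suc K)
  have "real (frac_num q e (Suc K)) / real q ^ Suc K
      = real (frac_num q e K) / real q ^ K + real (e K) / real q ^ Suc K"
    using Suc.prems by (simp add: field_simps)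
  then show ?case using Suc by simp
qed simp

lemma frac_num_split:
  "d \<le> K \<Longrightarrow> frac_num q e K = frac_num q e d * q ^ (K - d) + frac_num q (\<lambda>k. e (k + d)) (K - d)"
proof (induction K)
  case (Suc K)
  show ?case
  proof (cases "d = Suc K")
    case False
    then have "d \<le> K" "Suc K - d = Suc (K - d)" using Suc.prems by auto
    then show ?thesis using Suc.IH by (simp add: algebra_simps)
  qed simp
qed simp

lemma frac_num_div:
  assumes "\<And>k. k < K \<Longrightarrow> e k < q" and "d \<le> K"
  shows "frac_num q e K div q ^ (K - d) = frac_num q e d"
proof -
  have "frac_num q (\<lambda>k. e (k + d)) (K - d) < q ^ (K - d)"
    using assms by (intro frac_num_less) auto
  then show ?thesis unfolding frac_num_split[OF assms(2), of q e]
    by (intro div_nat_eqI) (simp_all add: algebra_simps)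
qed

lemma frac_num_digit:
  "(\<And>k. k < d \<Longrightarrow> e k < q) \<Longrightarrow> k < d \<Longrightarrow> frac_num q e d div q ^ (d - 1 - k) mod q = e k"
proof (induction d arbitrary: k)
  case (Suc d)
  show ?case
  proof (cases "k = d")
    case False
    then have kd: "k < d" using Suc.prems by simp
    have "Suc d - 1 - k = Suc (d - 1 - k)" using kd by simp
    then have "frac_num q e (Suc d) div q ^ (Suc d - 1 - k)
        = (q * frac_num q e d + e d) div q div q ^ (d - 1 - k)"
      by (simp add: div_mult2_eq mult.commute)
    also have "(q * frac_num q e d + e d) div q = frac_num q e d"
      using Suc.prems(1)[of d] by simp
    finally show ?thesis using Suc.IH[OF _ kd] Suc.prems by simp
  qed (use Suc.prems in simp)
qed simp

lemma frac_num_eq_iff: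
  assumes e: "\<And>k. k < d \<Longrightarrow> e k < q" and a: "a < q ^ d"
  shows "frac_num q e d = a \<longleftrightarrow> (\<forall>k<d. e k = a div q ^ (d - 1 - k) mod q)"
proof
  assume "frac_num q e d = a"
  then show "\<forall>k<d. e k = a div q ^ (d - 1 - k) mod q" using frac_num_digit[OF e] by auto
next
  assume h: "\<forall>k<d. e k = a div q ^ (d - 1 - k) mod q"
  show "frac_num q e d = a"
  proof (rule eq_if_digits_eq[where q = q and m = d])
    show "frac_num q e d < q ^ d" using e by (rule frac_num_less)
    fix r assume r: "r < d"
    have k: "d - 1 - (d - 1 - r) = r" "d - 1 - r < d" using r by auto
    have "frac_num q e d div q ^ r mod q = e (d - 1 - r)"
      using frac_num_digit[OF e k(2)] unfolding k(1) .
    also have "\<dots> = a div q ^ r mod q" using h[rule_format, OF k(2)] unfolding k(1) .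
    finally show "frac_num q e d div q ^ r mod q = a div q ^ r mod q" .
  qed (rule a)
qed

lemma frac_num_in_elementary_interval_iff:
  fixes q K d a :: nat
  assumes q: "q > 0" and e: "\<And>k. k < K \<Longrightarrow> e k < q" and d: "d \<le> K" and a: "a < q ^ d"
  shows "(real a / real q ^ d \<le> real (frac_num q e K) / real q ^ K
          \<and> real (frac_num q e K) / real q ^ K < real (a + 1) / real q ^ d)
     \<longleftrightarrow> (\<forall>k<d. e k = a div q ^ (d - 1 - k) mod q)"
proof -
  define Y where "Y = frac_num q e K"
  define Q where "Q = q ^ (K - d)"
  have Q: "Q > 0" using q unfolding Q_def by simp
  have qK: "real q ^ K = real q ^ d * real Q"
    unfolding Q_def using d by (simp add: power_add[symmetric])
  have "(real a / real q ^ d \<le> real Y / real q ^ K \<and> real Y / real q ^ K < real (a + 1) / real q ^ d)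
      \<longleftrightarrow> (real a * real Q \<le> real Y \<and> real Y < real (a + 1) * real Q)"
  proof -
    have c: "real q ^ d * real Q > 0" using q Q by simp
    have eq: "real b / real q ^ d = real b * real Q / (real q ^ d * real Q)" for b :: nat
      using Q by simp
    have le: "x / (real q ^ d * real Q) \<le> y / (real q ^ d * real Q) \<longleftrightarrow> x \<le> y" for x y
      using c by (simp add: divide_le_cancel)
    have less: "x / (real q ^ d * real Q) < y / (real q ^ d * real Q) \<longleftrightarrow> x < y" for x y
      using c q Q by (auto simp add: divide_less_cancel dest: order.asym)
    show ?thesis unfolding qK eq le less ..
  qed
  also have "\<dots> \<longleftrightarrow> (a * Q \<le> Y \<and> Y < (a + 1) * Q)"
    by (simp only: of_nat_mult[symmetric] of_nat_le_iff of_nat_less_iff)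
  also have "\<dots> \<longleftrightarrow> Y div Q = a"
  proof
    assume "Y div Q = a"
    then show "a * Q \<le> Y \<and> Y < (a + 1) * Q"
      using div_times_less_eq_dividend[of Y Q] dividend_less_div_times[OF Q, of Y]
      by (simp add: algebra_simps)
  qed (intro div_nat_eqI, simp_all add: algebra_simps)
  also have "Y div Q = frac_num q e d" unfolding Y_def Q_def by (rule frac_num_div[OF e d])
  also have "\<dots> = a \<longleftrightarrow> (\<forall>k<d. e k = a div q ^ (d - 1 - k) mod q)"
    using e d a by (intro frac_num_eq_iff) auto
  finally show ?thesis unfolding Y_def .
qed

section \<open>Digits of \<open>n + \<alpha>\<close> along an aligned block\<close>

text \<open>\<open>aligned q \<alpha> p j\<close> says \<open>p + \<alpha> \<equiv> 0 (mod q^j)\<close> in \<open>\<int>\<^sub>q\<close>, so that for \<open>i < q^j\<close> the lowest \<open>j\<close>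
  digits of \<open>p + i + \<alpha>\<close> are those of \<open>i\<close> and all higher digits are those of \<open>p + \<alpha>\<close>.\<close>

definition aligned :: "nat \<Rightarrow> (nat \<Rightarrow> nat) \<Rightarrow> nat \<Rightarrow> nat \<Rightarrow> bool" where
  "aligned q \<alpha> p j \<longleftrightarrow> q ^ j dvd p + from_digits q \<alpha> j"

lemma aligned_0: "aligned q \<alpha> p 0"
  unfolding aligned_def by simp

lemma aligned_mono: "aligned q \<alpha> p j \<Longrightarrow> l \<le> j \<Longrightarrow> aligned q \<alpha> p l"
proof -
  assume a: "aligned q \<alpha> p j" and l: "l \<le> j"
  obtain X where X: "from_digits q \<alpha> j = from_digits q \<alpha> l + q ^ l * X"
    using from_digits_prefix[OF l] by blast
  have "q ^ l dvd p + from_digits q \<alpha> j"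
    using a le_imp_power_dvd[OF l] unfolding aligned_def by (rule dvd_trans[rotated])
  then have "q ^ l dvd (p + from_digits q \<alpha> l) + q ^ l * X" using X by (simp add: add.assoc)
  then show ?thesis unfolding aligned_def by (simp add: dvd_add_left_iff)
qed

lemma aligned_add_mult: "aligned q \<alpha> p j \<Longrightarrow> aligned q \<alpha> (p + c * q ^ j) j"
  unfolding aligned_def by (metis add.commute add.left_commute dvd_add dvd_triv_right)

lemma aligned_power_minus: "(\<And>k. \<alpha> k < q) \<Longrightarrow> aligned q \<alpha> (q ^ m - from_digits q \<alpha> m) m"
  using from_digits_less[of m \<alpha> q] unfolding aligned_def by simp

lemma padic_add_digit_eq: "padic_add_digit q n \<alpha> r = (n + from_digits q \<alpha> (Suc r)) div q ^ r mod q"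
  unfolding padic_add_digit_def from_digits_def lessThan_Suc_atMost ..

lemma padic_add_digit_low:
  assumes q: "q > 0" and a: "aligned q \<alpha> p j" and r: "r < j"
  shows "padic_add_digit q (p + i) \<alpha> r = i div q ^ r mod q"
proof -
  have "aligned q \<alpha> p (Suc r)" using r by (intro aligned_mono[OF a]) auto
  then obtain M where "p + from_digits q \<alpha> (Suc r) = q ^ Suc r * M" unfolding aligned_def by blast
  then have M: "p + i + from_digits q \<alpha> (Suc r) = q ^ Suc r * M + i" by linarith
  have "padic_add_digit q (p + i) \<alpha> r = (q ^ Suc r * M + i) mod q ^ Suc r div q ^ r"
    unfolding padic_add_digit_eq M by (rule digit_eq_mod_div[OF q])
  also have "\<dots> = i div q ^ r mod q" using digit_eq_mod_div[OF q] by simp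
  finally show ?thesis .
qed

lemma padic_add_digit_high:
  assumes q: "q > 0" and a: "aligned q \<alpha> p j" and r: "j \<le> r" and i: "i < q ^ j"
  shows "padic_add_digit q (p + i) \<alpha> r = padic_add_digit q p \<alpha> r"
proof -
  obtain X where X: "from_digits q \<alpha> (Suc r) = from_digits q \<alpha> j + q ^ j * X"
    using from_digits_prefix[of j "Suc r"] r by auto
  obtain M where M: "p + from_digits q \<alpha> j = q ^ j * M" using a unfolding aligned_def by blast
  have e: "p + from_digits q \<alpha> (Suc r) = q ^ j * (M + X)" using X M by (simp add: algebra_simps)
  have qr: "q ^ r = q ^ j * q ^ (r - j)" using r by (simp add: power_add[symmetric])
  have gen: "(p + i' + from_digits q \<alpha> (Suc r)) div q ^ r = (M + X) div q ^ (r - j)"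
    if i': "i' < q ^ j" for i'
  proof -
    have "(q ^ j * (M + X) + i') div q ^ r = (q ^ j * (M + X) + i') div q ^ j div q ^ (r - j)"
      unfolding qr by (simp add: div_mult2_eq)
    also have "(q ^ j * (M + X) + i') div q ^ j = M + X" using i' q by simp
    finally show ?thesis using e by (simp add: algebra_simps)
  qed
  show ?thesis unfolding padic_add_digit_eq using gen[OF i] gen[of 0] q by simp
qed

definition digit_vec :: "nat \<Rightarrow> (nat \<Rightarrow> nat \<Rightarrow> 'a) \<Rightarrow> nat \<Rightarrow> nat \<Rightarrow> 'a vec" where
  "digit_vec q \<psi> m n = vec m (\<lambda>r. \<psi> r (n div q ^ r mod q))"

lemma bij_betw_digit_vec:
  assumes q: "q > 0" and \<psi>: "\<And>r. bij_betw (\<psi> r) {..<q} UNIV"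
  shows "bij_betw (digit_vec q \<psi> m) {..<q ^ m} (carrier_vec m)"
proof (rule bij_betw_imageI)
  show "inj_on (digit_vec q \<psi> m) {..<q ^ m}"
  proof (rule inj_onI)
    fix n n' assume n: "n \<in> {..<q ^ m}" "n' \<in> {..<q ^ m}" and e: "digit_vec q \<psi> m n = digit_vec q \<psi> m n'"
    show "n = n'"
    proof (rule eq_if_digits_eq[where q = q and m = m])
      fix r assume r: "r < m"
      have "\<psi> r (n div q ^ r mod q) = \<psi> r (n' div q ^ r mod q)"
        using arg_cong[OF e, of "\<lambda>v. v $ r"] r unfolding digit_vec_def by simp
      then show "n div q ^ r mod q = n' div q ^ r mod q"
        by (rule inj_onD[OF bij_betw_imp_inj_on[OF \<psi>]]) (simp_all add: q)
    qed (use n in auto)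
  qed
  show "digit_vec q \<psi> m ` {..<q ^ m} = carrier_vec m"
  proof
    show "digit_vec q \<psi> m ` {..<q ^ m} \<subseteq> carrier_vec m" unfolding digit_vec_def by auto
    show "carrier_vec m \<subseteq> digit_vec q \<psi> m ` {..<q ^ m}"
    proof
      fix w :: "'a vec" assume w: "w \<in> carrier_vec m"
      define c where "c r = inv_into {..<q} (\<psi> r) (w $ r)" for r
      have im: "\<psi> r ` {..<q} = UNIV" for r using \<psi>[of r] unfolding bij_betw_def by simp
      have c: "c r < q" for r
        unfolding c_def using inv_into_into[of "w $ r" "\<psi> r" "{..<q}"] im by auto
      have \<psi>c: "\<psi> r (c r) = w $ r" for r
        unfolding c_def using f_inv_into_f[of "w $ r" "\<psi> r" "{..<q}"] im by auto
      have "digit_vec q \<psi> m (from_digits q c m) = w"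
      proof (rule eq_vecI)
        fix r assume "r < dim_vec w"
        then have r: "r < m" using w by simp
        have "from_digits q c m div q ^ r mod q = c r" using c r by (intro from_digits_digit)
        then show "digit_vec q \<psi> m (from_digits q c m) $ r = w $ r"
          unfolding digit_vec_def using r \<psi>c by simp
      qed (use w in \<open>simp add: digit_vec_def\<close>)
      moreover have "from_digits q c m < q ^ m" using c by (intro from_digits_less)
      ultimately show "w \<in> digit_vec q \<psi> m ` {..<q ^ m}" by force
    qed
  qed
qed

lemma card_filter_bij_betw:
  assumes "bij_betw f A B"
  shows "card {x \<in> A. P (f x)} = card {y \<in> B. P y}"
proof -
  have "bij_betw f {x \<in> A. P (f x)} {y \<in> B. P y}"
    using assms unfolding bij_betw_def by (auto intro: inj_on_subset)
  then show ?thesis by (rule bij_betw_same_card)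
qed

section \<open>Star discrepancy\<close>

lemma star_disc_ge:
  fixes x :: "nat \<Rightarrow> nat \<Rightarrow> real"
  assumes u: "\<forall>i\<in>{1..s}. 0 \<le> u i \<and> u i \<le> 1"
  shows "\<bar>real (card {n. n < N \<and> (\<forall>i\<in>{1..s}. 0 \<le> x n i \<and> x n i < u i)}) / real N - (\<Prod>i=1..s. u i)\<bar>
         \<le> star_disc s N x"
  unfolding star_disc_def
proof (rule cSUP_upper)
  show "u \<in> {u. \<forall>i\<in>{1..s}. 0 \<le> u i \<and> u i \<le> 1}" using u by simp
  show "bdd_above ((\<lambda>u. \<bar>real (card {n. n < N \<and> (\<forall>i\<in>{1..s}. 0 \<le> x n i \<and> x n i < u i)}) / real N
      - (\<Prod>i=1..s. u i)\<bar>) ` {u. \<forall>i\<in>{1..s}. 0 \<le> u i \<and> u i \<le> 1})"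
  proof (rule bdd_aboveI2)
    fix v :: "nat \<Rightarrow> real" assume v: "v \<in> {u. \<forall>i\<in>{1..s}. 0 \<le> u i \<and> u i \<le> 1}"
    have "card {n. n < N \<and> (\<forall>i\<in>{1..s}. 0 \<le> x n i \<and> x n i < v i)} \<le> card {..<N}"
      by (rule card_mono) auto
    then have "0 \<le> real (card {n. n < N \<and> (\<forall>i\<in>{1..s}. 0 \<le> x n i \<and> x n i < v i)}) / real N"
      "real (card {n. n < N \<and> (\<forall>i\<in>{1..s}. 0 \<le> x n i \<and> x n i < v i)}) / real N \<le> 1"
      by (auto simp: divide_le_eq_1)
    moreover have "0 \<le> (\<Prod>i=1..s. v i)" "(\<Prod>i=1..s. v i) \<le> 1"
      using v by (auto intro: prod_nonneg prod_le_1)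
    ultimately show "\<bar>real (card {n. n < N \<and> (\<forall>i\<in>{1..s}. 0 \<le> x n i \<and> x n i < v i)}) / real N
        - (\<Prod>i=1..s. v i)\<bar> \<le> 1"
      by linarith
  qed
qed

lemma star_disc_nonneg: "0 \<le> star_disc s N x"
  using star_disc_ge[of s "\<lambda>_. 0" N x] by simp

lemma star_disc_le:
  fixes x :: "nat \<Rightarrow> nat \<Rightarrow> real" and B :: real
  assumes bound: "\<And>u. \<forall>i\<in>{1..s}. 0 \<le> u i \<and> u i \<le> 1 \<Longrightarrow>
    \<bar>real (card {n. n < N \<and> (\<forall>i\<in>{1..s}. 0 \<le> x n i \<and> x n i < u i)}) / real N - (\<Prod>i=1..s. u i)\<bar> \<le> B"
  shows "star_disc s N x \<le> B"
  unfolding star_disc_def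
proof (rule cSUP_least)
  have "(\<lambda>_. 0) \<in> {u. \<forall>i\<in>{1..s}. 0 \<le> u i \<and> u i \<le> (1::real)}" by simp
  then show "{u. \<forall>i\<in>{1..s}. 0 \<le> u i \<and> u i \<le> (1::real)} \<noteq> {}" by (metis empty_iff)
qed (rule bound, simp)

lemma prod_diff_le_card_mult:
  fixes a b :: "nat \<Rightarrow> real"
  assumes "finite I" and "\<forall>i\<in>I. 0 \<le> b i \<and> b i \<le> a i \<and> a i \<le> 1 \<and> a i - b i \<le> \<delta>"
  shows "prod a I - prod b I \<le> real (card I) * \<delta>"
  using assms
proof (induction I rule: finite_induct)
  case (insert x F)
  have h: "0 \<le> b x" "b x \<le> a x" "a x \<le> 1" "a x - b x \<le> \<delta>" using insert.prems by auto
  have IH: "prod a F - prod b F \<le> real (card F) * \<delta>" using insert by auto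
  have "0 \<le> b i \<and> b i \<le> 1" if "i \<in> F" for i
  proof -
    have "0 \<le> b i \<and> b i \<le> a i \<and> a i \<le> 1" using insert.prems that by simp
    then show ?thesis by linarith
  qed
  then have PB: "0 \<le> prod b F" "prod b F \<le> 1"
    by (auto intro: prod_nonneg prod_le_1)
  have PAB: "prod b F \<le> prod a F" using insert.prems by (intro prod_mono) auto
  have "prod a (insert x F) - prod b (insert x F) = a x * (prod a F - prod b F) + (a x - b x) * prod b F"
    using insert.hyps by (simp add: algebra_simps)
  also have "\<dots> \<le> 1 * (prod a F - prod b F) + \<delta> * 1"
    using h PAB PB by (intro add_mono mult_mono) auto
  also have "\<dots> \<le> real (card (insert x F)) * \<delta>" using IH insert.hyps by (simp add: algebra_simps)
  finally show ?case .
qed simp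

section \<open>Aligned blocks of the sequence are nets\<close>

locale alg2 =
  fixes s :: nat and T :: "nat \<Rightarrow> nat" and C :: "nat \<Rightarrow> nat \<Rightarrow> nat \<Rightarrow> 'f::{field,finite}"
    and \<psi> :: "nat \<Rightarrow> nat \<Rightarrow> 'f" and lam :: "nat \<Rightarrow> nat \<Rightarrow> 'f \<Rightarrow> nat" and \<alpha> :: "nat \<Rightarrow> nat"
    and q :: nat
  assumes q_card: "q = card (UNIV :: 'f set)"
    and T_le: "\<And>m. T m \<le> m"
    and finite_row: "\<And>i j. i \<in> {1..s} \<Longrightarrow> 1 \<le> j \<Longrightarrow> finite {r. C i j r \<noteq> 0}"
    and rank_cond: "\<And>m d. T m < m \<Longrightarrow> 1 \<le> (\<Sum>i=1..s. d i) \<Longrightarrow> (\<Sum>i=1..s. d i) \<le> m - T m \<Longrightarrow>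
         vec_space.rank (\<Sum>i=1..s. d i) (gen_submatrix s C d m) = (\<Sum>i=1..s. d i)"
    and \<alpha>_digits: "\<And>k. \<alpha> k < q"
    and \<psi>_bij: "\<And>r. bij_betw (\<psi> r) {..<q} UNIV"
    and lam_bij: "\<And>i j. i \<in> {1..s} \<Longrightarrow> 1 \<le> j \<Longrightarrow> bij_betw (lam i j) UNIV {..<q}"
begin

definition point_digit :: "nat \<Rightarrow> nat \<Rightarrow> nat \<Rightarrow> nat" where
  "point_digit i j n = lam i j (\<Sum>r\<in>{r. C i j r \<noteq> 0}. C i j r * \<psi> r (padic_add_digit q n \<alpha> r))"

definition trunc_point :: "nat \<Rightarrow> nat \<Rightarrow> nat \<Rightarrow> real" where
  "trunc_point K n i = real (frac_num q (\<lambda>k. point_digit i (Suc k) n) K) / real q ^ K"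

definition high_part :: "nat \<Rightarrow> nat \<Rightarrow> nat \<Rightarrow> nat \<Rightarrow> 'f" where
  "high_part p m i j = (\<Sum>r\<in>{r. C i j r \<noteq> 0 \<and> m \<le> r}. C i j r * \<psi> r (padic_add_digit q p \<alpha> r))"

lemma q_ge_2: "q \<ge> 2"
proof -
  have "card {0::'f, 1} \<le> card (UNIV :: 'f set)" by (rule card_mono) auto
  then show ?thesis by (simp add: q_card)
qed

lemma q_pos: "q > 0"
  using q_ge_2 by simp

lemma point_digit_less: "i \<in> {1..s} \<Longrightarrow> 1 \<le> j \<Longrightarrow> point_digit i j n < q"
  unfolding point_digit_def using bij_betw_apply[OF lam_bij] by blast

lemma trunc_point_bounds: "i \<in> {1..s} \<Longrightarrow> 0 \<le> trunc_point K n i \<and> trunc_point K n i < 1"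
  using frac_num_less[of K "\<lambda>k. point_digit i (Suc k) n" q] point_digit_less q_pos
  unfolding trunc_point_def by (simp add: divide_less_eq)

text \<open>Along an aligned block only the lowest \<open>m\<close> digits of \<open>s\<^sub>n\<close> vary, so a digit of the point is
  \<open>\<lambda>\<^sub>i\<^sub>,\<^sub>j\<close> applied to an affine function of the digit vector of \<open>n\<close>.\<close>

lemma point_digit_aligned:
  assumes a: "aligned q \<alpha> p m" and n: "n < q ^ m" and i: "i \<in> {1..s}" and j: "1 \<le> j"
  shows "point_digit i j (p + n) = lam i j (vec m (C i j) \<bullet> digit_vec q \<psi> m n + high_part p m i j)"
proof -
  define S where "S = {r. C i j r \<noteq> 0}"
  define g where "g r = C i j r * \<psi> r (padic_add_digit q (p + n) \<alpha> r)" for r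
  have "finite S" unfolding S_def using finite_row[OF i j] .
  then have "sum g S = sum g (S \<inter> {..<m}) + sum g (S - {..<m})" by (rule sum.Int_Diff)
  moreover have "sum g (S - {..<m}) = high_part p m i j"
  proof -
    have "S - {..<m} = {r. C i j r \<noteq> 0 \<and> m \<le> r}" unfolding S_def by auto
    then show ?thesis
      unfolding high_part_def g_def using padic_add_digit_high[OF q_pos a _ n] by (intro sum.cong) auto
  qed
  moreover have "sum g (S \<inter> {..<m}) = vec m (C i j) \<bullet> digit_vec q \<psi> m n"
  proof -
    have "sum g (S \<inter> {..<m}) = sum g {..<m}"
      by (rule sum.mono_neutral_left) (auto simp: S_def g_def)
    also have "\<dots> = (\<Sum>r<m. C i j r * \<psi> r (n div q ^ r mod q))"
      unfolding g_def using padic_add_digit_low[OF q_pos a] by (intro sum.cong) auto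
    finally show ?thesis unfolding scalar_prod_def digit_vec_def by (simp add: atLeast0LessThan)
  qed
  ultimately show ?thesis unfolding point_digit_def S_def g_def by simp
qed

lemma point_digit_aligned_eq_iff:
  assumes a: "aligned q \<alpha> p m" and n: "n < q ^ m" and i: "i \<in> {1..s}" and j: "1 \<le> j" and y: "y < q"
  shows "point_digit i j (p + n) = y \<longleftrightarrow>
    vec m (C i j) \<bullet> digit_vec q \<psi> m n = inv_into UNIV (lam i j) y - high_part p m i j"
proof -
  have "bij_betw (lam i j) UNIV {..<q}" by (rule lam_bij[OF i j])
  then have "lam i j z = y \<longleftrightarrow> z = inv_into UNIV (lam i j) y" for z
    using y by (auto simp: bij_betw_def f_inv_into_f)
  then show ?thesis unfolding point_digit_aligned[OF a n i j] by (simp add: eq_diff_eq)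
qed

lemma trunc_point_in_elementary_interval_iff:
  assumes i: "i \<in> {1..s}" and d: "d \<le> K" and a: "a < q ^ d"
  shows "(real a / real q ^ d \<le> trunc_point K n i \<and> trunc_point K n i < real (a + 1) / real q ^ d)
     \<longleftrightarrow> (\<forall>j\<in>{1..d}. point_digit i j n = a div q ^ (d - j) mod q)"
proof -
  have e: "\<And>k. k < K \<Longrightarrow> point_digit i (Suc k) n < q" using point_digit_less[OF i] by simp
  have "(real a / real q ^ d \<le> trunc_point K n i \<and> trunc_point K n i < real (a + 1) / real q ^ d)
     \<longleftrightarrow> (\<forall>k<d. point_digit i (Suc k) n = a div q ^ (d - 1 - k) mod q)"
    unfolding trunc_point_def by (rule frac_num_in_elementary_interval_iff[OF q_pos e d a])
  also have "\<dots> \<longleftrightarrow> (\<forall>j\<in>{1..d}. point_digit i j n = a div q ^ (d - j) mod q)"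
    using ball_less_Suc_iff_ball_atLeastAtMost[where Q = "\<lambda>j. point_digit i j n = a div q ^ (d - j) mod q"]
    by simp
  finally show ?thesis .
qed

lemma aligned_in_elementary_interval_iff:
  assumes a: "aligned q \<alpha> p m" and n: "n < q ^ m" and dK: "\<forall>i\<in>{1..s}. d i \<le> K"
    and aa: "\<forall>i\<in>{1..s}. aa i < q ^ d i"
  defines "\<tau> \<equiv> \<lambda>i j. inv_into UNIV (lam i j) (aa i div q ^ (d i - j) mod q) - high_part p m i j"
  shows "(\<forall>i\<in>{1..s}. real (aa i) / real q ^ d i \<le> trunc_point K (p + n) i
            \<and> trunc_point K (p + n) i < real (aa i + 1) / real q ^ d i)
     \<longleftrightarrow> gen_submatrix s C d m *\<^sub>v digit_vec q \<psi> m n = gen_rhs s \<tau> d"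
proof -
  have "(\<forall>i\<in>{1..s}. real (aa i) / real q ^ d i \<le> trunc_point K (p + n) i
            \<and> trunc_point K (p + n) i < real (aa i + 1) / real q ^ d i)
      \<longleftrightarrow> (\<forall>i\<in>{1..s}. \<forall>j\<in>{1..d i}. point_digit i j (p + n) = aa i div q ^ (d i - j) mod q)"
    using trunc_point_in_elementary_interval_iff dK aa by simp
  also have "\<dots> \<longleftrightarrow> (\<forall>i\<in>{1..s}. \<forall>j\<in>{1..d i}. vec m (C i j) \<bullet> digit_vec q \<psi> m n = \<tau> i j)"
    unfolding \<tau>_def using point_digit_aligned_eq_iff[OF a n] q_pos by simp
  also have "\<dots> \<longleftrightarrow> gen_submatrix s C d m *\<^sub>v digit_vec q \<psi> m n = gen_rhs s \<tau> d"
    by (rule gen_submatrix_mult_vec_eq_iff[symmetric])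
  finally show ?thesis .
qed

lemma aligned_elementary_interval_count:
  assumes a: "aligned q \<alpha> p m" and K: "m \<le> K"
    and dsum: "(\<Sum>i=1..s. d i) = m - T m" and d1: "1 \<le> (\<Sum>i=1..s. d i)"
    and aa: "\<forall>i\<in>{1..s}. aa i < q ^ d i"
  shows "card {n. n < q ^ m \<and> (\<forall>i\<in>{1..s}. real (aa i) / real q ^ d i \<le> trunc_point K (p + n) i
            \<and> trunc_point K (p + n) i < real (aa i + 1) / real q ^ d i)} = q ^ T m"
proof -
  define D where "D = (\<Sum>i=1..s. d i)"
  define \<tau> where "\<tau> i j = inv_into UNIV (lam i j) (aa i div q ^ (d i - j) mod q) - high_part p m i j" for i j
  define M where "M = gen_submatrix s C d m"
  have dK: "\<forall>i\<in>{1..s}. d i \<le> K"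
    using member_le_sum[of _ "{1..s}" d] dsum K by fastforce
  have "{n. n < q ^ m \<and> (\<forall>i\<in>{1..s}. real (aa i) / real q ^ d i \<le> trunc_point K (p + n) i
            \<and> trunc_point K (p + n) i < real (aa i + 1) / real q ^ d i)}
      = {n \<in> {..<q ^ m}. M *\<^sub>v digit_vec q \<psi> m n = gen_rhs s \<tau> d}"
    unfolding M_def \<tau>_def using aligned_in_elementary_interval_iff[OF a _ dK aa] by auto
  then have "card {n. n < q ^ m \<and> (\<forall>i\<in>{1..s}. real (aa i) / real q ^ d i \<le> trunc_point K (p + n) i
            \<and> trunc_point K (p + n) i < real (aa i + 1) / real q ^ d i)}
      = card {w \<in> carrier_vec m. M *\<^sub>v w = gen_rhs s \<tau> d}"
    using card_filter_bij_betw[OF bij_betw_digit_vec[OF q_pos \<psi>_bij]] by simp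
  moreover have "card {w \<in> carrier_vec m. M *\<^sub>v w = gen_rhs s \<tau> d} * q ^ D = q ^ m"
  proof (unfold q_card, rule card_full_rank_solutions)
    show "M \<in> carrier_mat D m" unfolding M_def D_def by (rule gen_submatrix_carrier)
    show "vec_space.rank D M = D" unfolding M_def D_def using dsum d1 by (intro rank_cond) simp_all
    show "gen_rhs s \<tau> d \<in> carrier_vec D" unfolding D_def by (rule gen_rhs_carrier)
  qed
  moreover have "q ^ m = q ^ T m * q ^ D"
    unfolding D_def dsum using T_le[of m] by (simp add: power_add[symmetric])
  ultimately show ?thesis using q_pos by simp
qed

lemma aligned_block_is_net:
  assumes a: "aligned q \<alpha> p m" and K: "m \<le> K"
  shows "is_net q (T m) m s (\<lambda>n. trunc_point K (p + n))"
  unfolding is_net_def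
proof (intro conjI)
  show "T m \<le> m" by (rule T_le)
  show "\<forall>n<q ^ m. \<forall>i\<in>{1..s}. 0 \<le> trunc_point K (p + n) i \<and> trunc_point K (p + n) i < 1"
    using trunc_point_bounds by blast
  show "\<forall>d aa. (\<forall>i\<in>{1..s}. aa i < q ^ d i) \<and> (\<Sum>i = 1..s. d i) = m - T m \<longrightarrow>
      card {n. n < q ^ m \<and> (\<forall>i\<in>{1..s}. real (aa i) / real q ^ d i \<le> trunc_point K (p + n) i
        \<and> trunc_point K (p + n) i < real (aa i + 1) / real q ^ d i)} = q ^ T m"
  proof (intro allI impI)
    fix d aa :: "nat \<Rightarrow> nat"
    assume h: "(\<forall>i\<in>{1..s}. aa i < q ^ d i) \<and> (\<Sum>i = 1..s. d i) = m - T m"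
    show "card {n. n < q ^ m \<and> (\<forall>i\<in>{1..s}. real (aa i) / real q ^ d i \<le> trunc_point K (p + n) i
        \<and> trunc_point K (p + n) i < real (aa i + 1) / real q ^ d i)} = q ^ T m"
    proof (cases "(\<Sum>i = 1..s. d i) = 0")
      case True
      then have "\<forall>i\<in>{1..s}. d i = 0 \<and> aa i = 0" using h by auto
      moreover have "T m = m" using True h T_le[of m] by simp
      ultimately show ?thesis using trunc_point_bounds by (auto intro: arg_cong[where f = card])
    next
      case False
      show ?thesis by (rule aligned_elementary_interval_count[OF a K]) (use h False in auto)
    qed
  qed
qed

section \<open>Local discrepancy of the truncated sequence\<close>

definition in_box :: "(nat \<Rightarrow> real) \<Rightarrow> (nat \<Rightarrow> real) \<Rightarrow> bool" where
  "in_box u z \<longleftrightarrow> (\<forall>i\<in>{1..s}. 0 \<le> z i \<and> z i < u i)"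

definition box_vol :: "(nat \<Rightarrow> real) \<Rightarrow> real" where
  "box_vol u = (\<Prod>i=1..s. u i)"

definition local_disc :: "nat \<Rightarrow> nat \<Rightarrow> nat \<Rightarrow> (nat \<Rightarrow> real) \<Rightarrow> real" where
  "local_disc K a b u =
     real (card {n. a \<le> n \<and> n < b \<and> in_box u (trunc_point K n)}) - real (b - a) * box_vol u"

lemma local_disc_split:
  assumes "a \<le> b" and "b \<le> c"
  shows "local_disc K a c u = local_disc K a b u + local_disc K b c u"
proof -
  have "{n. a \<le> n \<and> n < c \<and> in_box u (trunc_point K n)}
      = {n. a \<le> n \<and> n < b \<and> in_box u (trunc_point K n)} \<union> {n. b \<le> n \<and> n < c \<and> in_box u (trunc_point K n)}"
    using assms by auto
  then have "card {n. a \<le> n \<and> n < c \<and> in_box u (trunc_point K n)}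
      = card {n. a \<le> n \<and> n < b \<and> in_box u (trunc_point K n)} + card {n. b \<le> n \<and> n < c \<and> in_box u (trunc_point K n)}"
    by (simp add: card_Un_disjoint disjoint_iff)
  moreover have "real (c - a) = real (b - a) + real (c - b)" using assms by simp
  ultimately show ?thesis unfolding local_disc_def by (simp add: algebra_simps)
qed

end

locale alg2_disc = alg2 +
  fixes \<Delta> :: "nat \<Rightarrow> nat \<Rightarrow> nat \<Rightarrow> real"
  assumes \<Delta>_bound: "\<And>t m P. t \<le> m \<Longrightarrow> is_net q t m s P \<Longrightarrow> real q ^ m * star_disc s (q ^ m) P \<le> \<Delta> t m s"
begin

lemma \<Delta>_nonneg: "0 \<le> \<Delta> (T j) j s"
proof -
  have "is_net q (T j) j s (\<lambda>n. trunc_point j (q ^ j - from_digits q \<alpha> j + n))"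
    using aligned_block_is_net[OF aligned_power_minus[OF \<alpha>_digits]] by simp
  then show ?thesis using \<Delta>_bound[OF T_le] star_disc_nonneg
    by (meson order.trans zero_le_mult_iff zero_le_power of_nat_0_le_iff)
qed

lemma local_disc_aligned_block:
  assumes a: "aligned q \<alpha> p j" and K: "j \<le> K" and u: "\<forall>i\<in>{1..s}. 0 \<le> u i \<and> u i \<le> 1"
  shows "\<bar>local_disc K p (p + q ^ j) u\<bar> \<le> \<Delta> (T j) j s"
proof -
  define P where "P = (\<lambda>n. trunc_point K (p + n))"
  have "bij_betw (\<lambda>n. p + n) {n. n < q ^ j \<and> in_box u (P n)}
      {n. p \<le> n \<and> n < p + q ^ j \<and> in_box u (trunc_point K n)}"
    by (rule bij_betw_byWitness[where f' = "\<lambda>n. n - p"]) (auto simp: P_def)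
  then have c: "card {n. p \<le> n \<and> n < p + q ^ j \<and> in_box u (trunc_point K n)}
      = card {n. n < q ^ j \<and> in_box u (P n)}"
    by (rule bij_betw_same_card[symmetric])
  have qj: "real q ^ j > 0" using q_pos by simp
  have "\<bar>local_disc K p (p + q ^ j) u\<bar>
      = real q ^ j * \<bar>real (card {n. n < q ^ j \<and> in_box u (P n)}) / real (q ^ j) - box_vol u\<bar>"
    unfolding local_disc_def c using qj by (simp add: abs_mult[symmetric] field_simps)
  also have "\<dots> \<le> real q ^ j * star_disc s (q ^ j) P"
    using qj star_disc_ge[OF u, of "q ^ j" P] unfolding in_box_def box_vol_def
    by (intro mult_left_mono) simp_all
  also have "\<dots> \<le> \<Delta> (T j) j s"
    using \<Delta>_bound[OF T_le aligned_block_is_net[OF a K]] unfolding P_def by simp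
  finally show ?thesis .
qed

lemma local_disc_aligned_blocks:
  assumes a: "aligned q \<alpha> p j" and K: "j \<le> K" and u: "\<forall>i\<in>{1..s}. 0 \<le> u i \<and> u i \<le> 1"
  shows "\<bar>local_disc K p (p + c * q ^ j) u\<bar> \<le> real c * \<Delta> (T j) j s"
proof (induction c)
  case (Suc c)
  let ?p' = "p + c * q ^ j"
  have "local_disc K p (p + Suc c * q ^ j) u = local_disc K p ?p' u + local_disc K ?p' (?p' + q ^ j) u"
    by (subst local_disc_split[symmetric]) (auto simp: algebra_simps)
  also have "\<bar>\<dots>\<bar> \<le> real c * \<Delta> (T j) j s + \<Delta> (T j) j s"
    using Suc.IH local_disc_aligned_block[OF aligned_add_mult[OF a] K u]
    by (intro order.trans[OF abs_triangle_ineq] add_mono)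
  finally show ?case by (simp add: algebra_simps)
qed (simp add: local_disc_def)

text \<open>\<open>[0, q^m - (\<alpha> mod q^m))\<close> is \<open>[0, q^(m-1) - (\<alpha> mod q^(m-1)))\<close> followed by \<open>q - 1 - \<alpha>\<^sub>m\<^sub>-\<^sub>1\<close>
  aligned blocks of length \<open>q^(m-1)\<close>.\<close>

lemma local_disc_initial:
  assumes m: "1 \<le> m" and K: "m \<le> K" and u: "\<forall>i\<in>{1..s}. 0 \<le> u i \<and> u i \<le> 1"
  shows "\<bar>local_disc K 0 (q ^ m - from_digits q \<alpha> m) u\<bar>
    \<le> (real q - real (\<alpha> 0)) * \<Delta> (T 0) 0 s + (\<Sum>j=1..<m. (real q - 1 - real (\<alpha> j)) * \<Delta> (T j) j s)"
  using m K
proof (induction m rule: nat_induct_at_least)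
  case base
  have "q ^ 1 - from_digits q \<alpha> 1 = 0 + (q - \<alpha> 0) * q ^ 0" by (simp add: from_digits_def)
  then show ?case
    using local_disc_aligned_blocks[OF aligned_0 _ u, of K 0 "q - \<alpha> 0"] \<alpha>_digits[of 0] by simp
next
  case (Suc m)
  define L where "L = from_digits q \<alpha> m"
  define Q where "Q = q ^ m"
  define b where "b = q - 1 - \<alpha> m"
  have LQ: "L < Q" unfolding L_def Q_def using \<alpha>_digits by (rule from_digits_less)
  have "q ^ Suc m = (\<alpha> m + 1 + b) * Q" unfolding b_def Q_def using \<alpha>_digits[of m] by simp
  then have p: "q ^ Suc m - from_digits q \<alpha> (Suc m) = (Q - L) + b * Q"
    using LQ unfolding L_def Q_def from_digits_def by (simp add: algebra_simps)
  have "\<bar>local_disc K 0 (q ^ Suc m - from_digits q \<alpha> (Suc m)) u\<bar>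
      \<le> \<bar>local_disc K 0 (Q - L) u\<bar> + \<bar>local_disc K (Q - L) (Q - L + b * Q) u\<bar>"
    unfolding p local_disc_split[of 0 "Q - L" "Q - L + b * Q", OF le0 le_add1] by (rule abs_triangle_ineq)
  also have "\<dots> \<le> ((real q - real (\<alpha> 0)) * \<Delta> (T 0) 0 s + (\<Sum>j=1..<m. (real q - 1 - real (\<alpha> j)) * \<Delta> (T j) j s))
      + real b * \<Delta> (T m) m s"
  proof (rule add_mono)
    show "\<bar>local_disc K 0 (Q - L) u\<bar> \<le> (real q - real (\<alpha> 0)) * \<Delta> (T 0) 0 s
        + (\<Sum>j=1..<m. (real q - 1 - real (\<alpha> j)) * \<Delta> (T j) j s)"
      using Suc unfolding Q_def L_def by simp
    show "\<bar>local_disc K (Q - L) (Q - L + b * Q) u\<bar> \<le> real b * \<Delta> (T m) m s"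
      unfolding Q_def L_def using Suc.prems
      by (intro local_disc_aligned_blocks[OF aligned_power_minus[OF \<alpha>_digits] _ u]) simp
  qed
  also have "\<dots> = (real q - real (\<alpha> 0)) * \<Delta> (T 0) 0 s + (\<Sum>j=1..<Suc m. (real q - 1 - real (\<alpha> j)) * \<Delta> (T j) j s)"
    using Suc.hyps \<alpha>_digits[of m] by (simp add: b_def of_nat_diff)
  finally show ?case .
qed

text \<open>\<open>[p, p + M)\<close> splits into \<open>M\<^sub>m\<close> aligned blocks of length \<open>q^m\<close> followed by an aligned
  segment of length \<open>M mod q^m\<close>, where \<open>M\<^sub>m\<close> is the \<open>m\<close>-th digit of \<open>M\<close>.\<close>

lemma local_disc_aligned_segment:
  assumes "aligned q \<alpha> p m" and "m \<le> K" and "M < q ^ Suc m" and u: "\<forall>i\<in>{1..s}. 0 \<le> u i \<and> u i \<le> 1"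
  shows "\<bar>local_disc K p (p + M) u\<bar> \<le> (\<Sum>j=0..m. real (M div q ^ j mod q) * \<Delta> (T j) j s)"
  using assms(1-3)
proof (induction m arbitrary: p M)
  case 0
  then show ?case using local_disc_aligned_blocks[OF 0(1) _ u, of K M] by simp
next
  case (Suc m)
  define c where "c = M div q ^ Suc m"
  define M' where "M' = M mod q ^ Suc m"
  let ?p' = "p + c * q ^ Suc m"
  have M: "M = c * q ^ Suc m + M'" unfolding c_def M'_def by (rule div_mult_mod_eq[symmetric])
  have c: "c = M div q ^ Suc m mod q"
    unfolding c_def using Suc.prems(3) q_pos by (simp add: div_less_iff_less_mult mult.commute)
  have a': "aligned q \<alpha> ?p' m" by (rule aligned_mono[OF aligned_add_mult[OF Suc.prems(1)]]) simp
  have digits: "M' div q ^ j mod q = M div q ^ j mod q" if "j \<le> m" for j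
  proof -
    have "q ^ Suc j dvd q ^ Suc m" using that by (intro le_imp_power_dvd) simp
    then show ?thesis
      unfolding M'_def digit_eq_mod_div[OF q_pos] by (simp add: mod_mod_cancel)
  qed
  have "local_disc K p (p + M) u = local_disc K p ?p' u + local_disc K ?p' (?p' + M') u"
    unfolding M by (subst local_disc_split[symmetric]) (auto simp: algebra_simps)
  then have "\<bar>local_disc K p (p + M) u\<bar> \<le> \<bar>local_disc K p ?p' u\<bar> + \<bar>local_disc K ?p' (?p' + M') u\<bar>"
    by (simp only: abs_triangle_ineq)
  also have "\<dots> \<le> real c * \<Delta> (T (Suc m)) (Suc m) s + (\<Sum>j=0..m. real (M' div q ^ j mod q) * \<Delta> (T j) j s)"
  proof (rule add_mono)
    show "\<bar>local_disc K p ?p' u\<bar> \<le> real c * \<Delta> (T (Suc m)) (Suc m) s"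
      by (rule local_disc_aligned_blocks[OF Suc.prems(1,2) u])
    show "\<bar>local_disc K ?p' (?p' + M') u\<bar> \<le> (\<Sum>j=0..m. real (M' div q ^ j mod q) * \<Delta> (T j) j s)"
      using Suc.prems(2) q_pos by (intro Suc.IH[OF a']) (simp_all add: M'_def)
  qed
  also have "\<dots> = (\<Sum>j=0..Suc m. real (M div q ^ j mod q) * \<Delta> (T j) j s)"
    using digits c by simp
  finally show ?case .
qed

definition disc_bound :: "nat \<Rightarrow> nat \<Rightarrow> real" where
  "disc_bound N r = (real q - real (\<alpha> 0)) * \<Delta> (T 0) 0 s
     + (\<Sum>j=1..<r. (real q - 1 - real (\<alpha> j)) * \<Delta> (T j) j s)
     + (\<Sum>j=0..r. real ((N - q ^ r + from_digits q \<alpha> r) div q ^ j mod q) * \<Delta> (T j) j s)"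

text \<open>\<open>[0, N)\<close> is the initial segment \<open>[0, q^r - (\<alpha> mod q^r))\<close> followed by an aligned segment of
  length \<open>N' < q^(r+1)\<close>.\<close>

lemma local_disc_le_disc_bound:
  assumes N: "1 \<le> N" "q ^ r \<le> N" "N < q ^ Suc r" and K: "r \<le> K"
    and u: "\<forall>i\<in>{1..s}. 0 \<le> u i \<and> u i \<le> 1"
  shows "\<bar>local_disc K 0 N u\<bar> \<le> disc_bound N r"
proof (cases "r = 0")
  case True
  have "\<bar>local_disc K 0 N u\<bar> \<le> real N * \<Delta> (T 0) 0 s"
    using local_disc_aligned_blocks[where p = 0 and j = 0 and c = N, OF aligned_0 le0 u] by simp
  also have "\<dots> \<le> (real q - real (\<alpha> 0) + real (N - 1)) * \<Delta> (T 0) 0 s"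
    using \<alpha>_digits[of 0] N(1) by (intro mult_right_mono \<Delta>_nonneg) simp
  also have "\<dots> = disc_bound N r"
    using True N(3) by (simp add: disc_bound_def from_digits_def algebra_simps)
  finally show ?thesis .
next
  case False
  define p where "p = q ^ r - from_digits q \<alpha> r"
  define N' where "N' = N - q ^ r + from_digits q \<alpha> r"
  have L: "from_digits q \<alpha> r < q ^ r" using \<alpha>_digits by (rule from_digits_less)
  have Np: "N = p + N'" unfolding p_def N'_def using L N(2) by simp
  have "\<bar>local_disc K 0 N u\<bar> \<le> \<bar>local_disc K 0 p u\<bar> + \<bar>local_disc K p (p + N') u\<bar>"
    unfolding Np local_disc_split[of 0 p "p + N'", OF le0 le_add1] by (rule abs_triangle_ineq)
  also have "\<dots> \<le> disc_bound N r"
    unfolding disc_bound_def N'_def[symmetric]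
  proof (rule add_mono)
    show "\<bar>local_disc K 0 p u\<bar> \<le> (real q - real (\<alpha> 0)) * \<Delta> (T 0) 0 s
        + (\<Sum>j=1..<r. (real q - 1 - real (\<alpha> j)) * \<Delta> (T j) j s)"
      unfolding p_def using False K u by (intro local_disc_initial) auto
    show "\<bar>local_disc K p (p + N') u\<bar> \<le> (\<Sum>j=0..r. real (N' div q ^ j mod q) * \<Delta> (T j) j s)"
      unfolding p_def using L N(2,3) K
      by (intro local_disc_aligned_segment[OF aligned_power_minus[OF \<alpha>_digits] _ _ u]) (auto simp: N'_def)
  qed
  finally show ?thesis .
qed

end

section \<open>From the truncated to the exact sequence\<close>

context alg2
begin

abbreviation seq :: "nat \<Rightarrow> nat \<Rightarrow> real" where
  "seq \<equiv> alg2_point C \<psi> lam \<alpha>"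

lemma trunc_point_le_seq:
  assumes i: "i \<in> {1..s}"
  shows "trunc_point K n i \<le> seq n i \<and> seq n i \<le> trunc_point K n i + 1 / real q ^ K"
proof -
  define f where "f j = real (point_digit i (Suc j) n) / real q ^ Suc j" for j
  define x where "x = 1 / real q"
  define g where "g j = (real q - 1) / real q * x ^ j" for j
  have q2: "real q \<ge> 2" using q_ge_2 by simp
  have x: "0 \<le> x" "x < 1" unfolding x_def using q2 by auto
  have seq: "seq n i = suminf f" unfolding alg2_point_def f_def point_digit_def by (simp only: q_card)
  have f0: "0 \<le> f j" for j unfolding f_def by simp
  have fg: "f j \<le> g j" for j
  proof -
    have "real (point_digit i (Suc j) n) \<le> real q - 1"
      using point_digit_less[OF i, of "Suc j" n] by linarith
    then have "f j \<le> (real q - 1) / real q ^ Suc j" unfolding f_def using q2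
      by (intro divide_right_mono) auto
    also have "\<dots> = g j" unfolding g_def x_def by (simp add: power_divide field_simps)
    finally show ?thesis .
  qed
  have sg: "summable g" unfolding g_def using x by (intro summable_mult summable_geometric) simp
  have sf: "summable f" by (rule summable_comparison_test'[OF sg]) (use f0 fg in simp)
  have split: "suminf f = (\<Sum>j. f (j + K)) + (\<Sum>j<K. f j)" by (rule suminf_split_initial_segment[OF sf])
  have trunc: "(\<Sum>j<K. f j) = trunc_point K n i"
    unfolding trunc_point_def f_def using frac_num_div_power[OF q_pos] by simp
  have sfK: "summable (\<lambda>j. f (j + K))" using sf by (rule summable_ignore_initial_segment)
  have sgK: "summable (\<lambda>j. g (j + K))" using sg by (rule summable_ignore_initial_segment)
  have "0 \<le> (\<Sum>j. f (j + K))" by (rule suminf_nonneg[OF sfK]) (use f0 in simp)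
  moreover have "(\<Sum>j. f (j + K)) \<le> (\<Sum>j. g (j + K))" by (rule suminf_le) (use fg sfK sgK in auto)
  moreover have "(\<Sum>j. g (j + K)) = (real q - 1) / real q * x ^ K * (\<Sum>j. x ^ j)"
    unfolding g_def
    by (subst suminf_mult[symmetric]) (use x in \<open>simp_all add: power_add mult_ac summable_geometric\<close>)
  moreover have "\<dots> = 1 / real q ^ K"
  proof -
    have "(\<Sum>j. x ^ j) = 1 / (1 - x)" by (rule suminf_geometric) (use x in simp)
    moreover have "1 - x = (real q - 1) / real q" unfolding x_def using q2 by (simp add: field_simps)
    ultimately show ?thesis unfolding x_def using q2 by (simp add: field_simps power_one_over)
  qed
  ultimately show ?thesis unfolding seq split trunc by simp
qed

lemma count_seq_le_count_trunc:
  "card {n. n < N \<and> in_box u (seq n)} \<le> card {n. n < N \<and> in_box u (trunc_point K n)}"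
proof -
  have "in_box u (trunc_point K n)" if "in_box u (seq n)" for n
    unfolding in_box_def
  proof
    fix i assume i: "i \<in> {1..s}"
    then show "0 \<le> trunc_point K n i \<and> trunc_point K n i < u i"
      using that trunc_point_le_seq[OF i, of K n] trunc_point_bounds[OF i, of K n]
      unfolding in_box_def by fastforce
  qed
  then show ?thesis by (intro card_mono) auto
qed

lemma count_trunc_le_count_seq:
  fixes u :: "nat \<Rightarrow> real" and K :: nat
  defines "v \<equiv> \<lambda>i. max (u i - 1 / real q ^ K) 0"
  shows "card {n. n < N \<and> in_box v (trunc_point K n)} \<le> card {n. n < N \<and> in_box u (seq n)}"
proof -
  have "in_box u (seq n)" if "in_box v (trunc_point K n)" for n
    unfolding in_box_def
  proof
    fix i assume i: "i \<in> {1..s}"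
    then have "0 \<le> trunc_point K n i" "trunc_point K n i < max (u i - 1 / real q ^ K) 0"
      using that unfolding in_box_def v_def by auto
    then show "0 \<le> seq n i \<and> seq n i < u i"
      using trunc_point_le_seq[OF i, of K n] by (auto simp: max_def split: if_splits)
  qed
  then show ?thesis by (intro card_mono) auto
qed

lemma box_vol_shrink_le:
  assumes "\<forall>i\<in>{1..s}. 0 \<le> u i \<and> u i \<le> 1" and "0 \<le> \<delta>"
  shows "box_vol u - box_vol (\<lambda>i. max (u i - \<delta>) 0) \<le> real s * \<delta>"
proof -
  have "\<forall>i\<in>{1..s}. 0 \<le> max (u i - \<delta>) 0 \<and> max (u i - \<delta>) 0 \<le> u i \<and> u i \<le> 1 \<and> u i - max (u i - \<delta>) 0 \<le> \<delta>"
    using assms by auto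
  from prod_diff_le_card_mult[OF _ this] show ?thesis unfolding box_vol_def by simp
qed

end

context alg2_disc
begin

lemma count_seq_error_le:
  assumes N: "1 \<le> N" "q ^ r \<le> N" "N < q ^ Suc r" and K: "r \<le> K"
    and u: "\<forall>i\<in>{1..s}. 0 \<le> u i \<and> u i \<le> 1"
  shows "\<bar>real (card {n. n < N \<and> in_box u (seq n)}) - real N * box_vol u\<bar>
    \<le> disc_bound N r + real N * real s / real q ^ K"
proof -
  define \<delta> where "\<delta> = 1 / real q ^ K"
  define v where "v i = max (u i - \<delta>) 0" for i
  define A where "A = real (card {n. n < N \<and> in_box u (seq n)})"
  have \<delta>: "0 \<le> \<delta>" unfolding \<delta>_def by simp
  have v: "\<forall>i\<in>{1..s}. 0 \<le> v i \<and> v i \<le> 1" using u \<delta> unfolding v_def by auto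
  have disc: "local_disc K 0 N w = real (card {n. n < N \<and> in_box w (trunc_point K n)}) - real N * box_vol w"
    for w unfolding local_disc_def by simp
  have "A \<le> real (card {n. n < N \<and> in_box u (trunc_point K n)})"
    unfolding A_def using count_seq_le_count_trunc by simp
  also have "\<dots> \<le> disc_bound N r + real N * box_vol u"
    using local_disc_le_disc_bound[OF N K u] unfolding disc by linarith
  finally have upper: "A - real N * box_vol u \<le> disc_bound N r" by simp
  have "real N * (box_vol u - box_vol v) \<le> real N * (real s * \<delta>)"
    using box_vol_shrink_le[OF u \<delta>] unfolding v_def by (intro mult_left_mono) auto
  then have "real N * box_vol u - real N * real s * \<delta> \<le> real N * box_vol v"
    by (simp add: algebra_simps)
  also have "\<dots> \<le> disc_bound N r + real (card {n. n < N \<and> in_box v (trunc_point K n)})"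
    using local_disc_le_disc_bound[OF N K v] unfolding disc by linarith
  also have "\<dots> \<le> disc_bound N r + A"
    unfolding A_def v_def \<delta>_def using count_trunc_le_count_seq by simp
  finally have lower: "real N * box_vol u - A \<le> disc_bound N r + real N * real s * \<delta>" by simp
  have "real N * real s * \<delta> = real N * real s / real q ^ K" unfolding \<delta>_def by simp
  moreover have "0 \<le> real N * real s * \<delta>" using \<delta> by simp
  ultimately show ?thesis using upper lower unfolding A_def abs_le_iff by linarith
qed

lemma star_disc_seq_le_trunc:
  assumes N: "1 \<le> N" "q ^ r \<le> N" "N < q ^ Suc r" and K: "r \<le> K"
  shows "real N * star_disc s N seq \<le> disc_bound N r + real N * real s / real q ^ K"
proof -
  have Npos: "real N > 0" using N(1) by simp
  have "star_disc s N seq \<le> (disc_bound N r + real N * real s / real q ^ K) / real N"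
  proof (rule star_disc_le)
    fix u :: "nat \<Rightarrow> real" assume u: "\<forall>i\<in>{1..s}. 0 \<le> u i \<and> u i \<le> 1"
    have "\<bar>real (card {n. n < N \<and> in_box u (seq n)}) / real N - box_vol u\<bar>
        = \<bar>real (card {n. n < N \<and> in_box u (seq n)}) - real N * box_vol u\<bar> / real N"
    proof -
      have "real (card {n. n < N \<and> in_box u (seq n)}) / real N - box_vol u
          = (real (card {n. n < N \<and> in_box u (seq n)}) - real N * box_vol u) / real N"
        using Npos by (simp add: field_simps)
      then show ?thesis using Npos by (simp add: abs_divide)
    qed
    also have "\<dots> \<le> (disc_bound N r + real N * real s / real q ^ K) / real N"
      using count_seq_error_le[OF N K u] Npos by (intro divide_right_mono) auto
    finally show "\<bar>real (card {n. n < N \<and> (\<forall>i\<in>{1..s}. 0 \<le> seq n i \<and> seq n i < u i)}) / real N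
        - (\<Prod>i=1..s. u i)\<bar> \<le> (disc_bound N r + real N * real s / real q ^ K) / real N"
      unfolding in_box_def box_vol_def .
  qed
  then show ?thesis using Npos by (simp add: field_simps)
qed

text \<open>The error term \<open>N s / q^K\<close> of the truncation vanishes as \<open>K \<rightarrow> \<infinity>\<close>.\<close>

lemma star_disc_seq_le:
  assumes N: "1 \<le> N" "q ^ r \<le> N" "N < q ^ Suc r"
  shows "real N * star_disc s N seq \<le> disc_bound N r"
proof (rule field_le_epsilon)
  fix e :: real assume e: "0 < e"
  obtain k :: nat where k: "real N * real s / e < real k" using reals_Archimedean2 by blast
  define K where "K = max r k"
  have "real K < 2 ^ K" by (metis less_exp of_nat_less_iff of_nat_numeral of_nat_power)
  also have "(2::real) ^ K \<le> real q ^ K" using q_ge_2 by (intro power_mono) auto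
  finally have "real N * real s / e < real q ^ K" using k unfolding K_def by linarith
  then have "real N * real s / real q ^ K < e" using e q_pos by (simp add: field_simps)
  moreover have "real N * star_disc s N seq \<le> disc_bound N r + real N * real s / real q ^ K"
    by (rule star_disc_seq_le_trunc[OF N]) (simp add: K_def)
  ultimately show "real N * star_disc s N seq \<le> disc_bound N r + e" by linarith
qed

end

theorem proposition2:
  fixes s :: nat
    and T :: "nat \<Rightarrow> nat"
    and C :: "nat \<Rightarrow> nat \<Rightarrow> nat \<Rightarrow> 'f::{field,finite}"
    and \<psi> :: "nat \<Rightarrow> nat \<Rightarrow> 'f"
    and lam :: "nat \<Rightarrow> nat \<Rightarrow> 'f \<Rightarrow> nat"
    and \<alpha> :: "nat \<Rightarrow> nat"
    and \<Delta> :: "nat \<Rightarrow> nat \<Rightarrow> nat \<Rightarrow> real"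
    and N :: nat
  assumes s_pos: "1 \<le> s"
    and T_le: "\<And>m. T m \<le> m"
    and finite_row: "\<And>i j. i \<in> {1..s} \<Longrightarrow> 1 \<le> j \<Longrightarrow> finite {r. C i j r \<noteq> 0}"
    and rank_cond: "\<And>m d. T m < m \<Longrightarrow> 1 \<le> (\<Sum>i=1..s. d i) \<Longrightarrow> (\<Sum>i=1..s. d i) \<le> m - T m \<Longrightarrow>
         vec_space.rank (\<Sum>i=1..s. d i) (gen_submatrix s C d m) = (\<Sum>i=1..s. d i)"
    and \<alpha>_digits: "\<And>k. \<alpha> k < (card (UNIV :: 'f set))"
    and \<psi>_bij: "\<And>r. bij_betw (\<psi> r) {..<(card (UNIV :: 'f set))} UNIV"
    and lam_bij: "\<And>i j. i \<in> {1..s} \<Longrightarrow> 1 \<le> j \<Longrightarrow> bij_betw (lam i j) UNIV {..<(card (UNIV :: 'f set))}"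
    and \<Delta>_bound: "\<And>t m P. t \<le> m \<Longrightarrow> is_net (card (UNIV :: 'f set)) t m s P \<Longrightarrow>
         real (card (UNIV :: 'f set)) ^ m * star_disc s ((card (UNIV :: 'f set)) ^ m) P \<le> \<Delta> t m s"
    and N_pos: "1 \<le> N"
  shows "let q = (card (UNIV :: 'f set)); r = nat \<lfloor>log (real q) (real N)\<rfloor>;
             N' = N - q ^ r + (\<Sum>j<r. \<alpha> j * q ^ j);
             b = (\<lambda>j. (N' div q ^ j) mod q)
         in real N * star_disc s N (alg2_point C \<psi> lam \<alpha>)
            \<le> (real q - real (\<alpha> 0)) * \<Delta> (T 0) 0 s
              + (\<Sum>j=1..<r. (real q - 1 - real (\<alpha> j)) * \<Delta> (T j) j s)
              + (\<Sum>j=0..r. real (b j) * \<Delta> (T j) j s)"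
proof -
  interpret alg2_disc s T C \<psi> lam \<alpha> "card (UNIV :: 'f set)" \<Delta>
    by unfold_locales (fact T_le finite_row rank_cond \<alpha>_digits \<psi>_bij lam_bij \<Delta>_bound refl)+
  define r where "r = nat \<lfloor>log (real (card (UNIV :: 'f set))) (real N)\<rfloor>"
  have q: "2 \<le> card (UNIV :: 'f set)" by (rule q_ge_2)
  then have "\<lfloor>log (real (card (UNIV :: 'f set))) (real N)\<rfloor> = int r"
    unfolding r_def using N_pos by simp
  then have "card (UNIV :: 'f set) ^ r \<le> N \<and> N < card (UNIV :: 'f set) ^ (r + 1)"
    using floor_log_nat_eq_powr_iff[OF q] N_pos by simp
  then have "real N * star_disc s N (alg2_point C \<psi> lam \<alpha>) \<le> disc_bound N r"
    using star_disc_seq_le N_pos by simp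
  then show ?thesis unfolding disc_bound_def from_digits_def Let_def r_def[symmetric] .
qed

end
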